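(* Let $r\ge1$ and let $\gamma_1,\dots,\gamma_{r+1},p_1,\dots,p_{r+1},a_1,\dots,a_{r+1}$ be indeterminates. Let $\mathrm{Wr}$ denote the relations (coefficientwise in $z$) $$\det_{1\le i,j\le r+1}\big[(\gamma_i+\partial_z)^{j-1}(z-p_i)\big]=\det_{1\le i,j\le r+1}\big[z\gamma_i^{j-1}-p_i\gamma_i^{j-1}+(j-1)\gamma_i^{j-2}\big]=c\prod_{i=1}^{r+1}(z-a_i),\qquad c=\prod_{i<j}(\gamma_j-\gamma_i),$$ and set ${\rm Fun}(r{\rm Op}_Z^{\Lambda})=\mathbb{C}(\gamma_i,p_i,a_i)/\mathrm{Wr}$. Let $t=(t_{ij})_{i,j=1}^{r+1}$ be the rational Calogero–Moser Lax matrix $$t_{ii}=p_i-\sum_{j\neq i}\frac{1}{\gamma_i-\gamma_j},\qquad t_{ij}=\frac{1}{\gamma_i-\gamma_j}\cdot\frac{\prod_{k\neq i}(\gamma_i-\gamma_k)}{\prod_{l\neq j}(\gamma_j-\gamma_l)}\ (i\neq j),$$ and define the rCM Hamiltonians by $\det(z-t)=\sum_k H^{rCM}_k(\{\gamma_i\},\{p_i\})z^k$. Then there is an isomorphism of algebras $${\rm Fun}(r{\rm Op}_Z^{\Lambda})\cong\mathbb{C}(\gamma_i,p_i,a_i)\Big/\Big(\text{relations }\det(z-t)=\prod_{i=1}^{r+1}(z-a_i)\text{ coefficientwise in }z\Big).$$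
   Context: ${\rm Fun}(r{\rm Op}_Z^{\Lambda})$ is the algebra of functions on the space of canonical rationally $Z$-twisted Miura $SL(r+1)$-opers on $\mathbb{P}^1$: $Z=\mathrm{diag}(\gamma_1,\dots,\gamma_{r+1})$ is regular semisimple, the oper connection is gauge equivalent to $\partial_z+Z$, the section of the line subbundle has components $s_i(z)=z-p_i$ (degree one, monic), and the only regular singularities are the distinct roots $a_i$ of $\Lambda(z)=\mathcal{D}_{r+1}(z)$, where $\mathcal{D}_{r+1}$ is the twisted Wronskian $\det[(\gamma_i+\partial_z)^{j-1}s_i]$; this gives the relation $\mathrm{Wr}$. *)

theory Defs
  imports "Jordan_Normal_Form.Char_Poly" "Jordan_Normal_Form.Determinant"
begin

text \<open>Inverse of a unit in a commutative ring (only applied to units).\<close>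
definition uinv :: "'a::comm_ring_1 \<Rightarrow> 'a" where
  "uinv x = (SOME y. x * y = 1)"

text \<open>A commutative ring together with a unital ring homomorphism from the complex numbers,
  i.e. a commutative complex algebra.\<close>
definition complex_alg_hom :: "(complex \<Rightarrow> 'a::comm_ring_1) \<Rightarrow> bool" where
  "complex_alg_hom \<phi> \<longleftrightarrow> \<phi> 1 = 1 \<and> (\<forall>x y. \<phi> (x + y) = \<phi> x + \<phi> y) \<and> (\<forall>x y. \<phi> (x * y) = \<phi> x * \<phi> y)"

text \<open>Twisted Wronskian matrix, entry (i,j) (0-indexed) is
  (gamma_i + d/dz)^j (z - p_i) = z gamma_i^j - p_i gamma_i^j + j gamma_i^(j-1).\<close>
definition wr_matrix :: "nat \<Rightarrow> (nat \<Rightarrow> 'a::comm_ring_1) \<Rightarrow> (nat \<Rightarrow> 'a) \<Rightarrow> 'a poly mat" where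
  "wr_matrix n \<gamma> p = mat n n (\<lambda>(i, j).
     [: - p i * \<gamma> i ^ j + of_nat j * \<gamma> i ^ (j - 1), \<gamma> i ^ j :])"

definition vandermonde_const :: "nat \<Rightarrow> (nat \<Rightarrow> 'a::comm_ring_1) \<Rightarrow> 'a" where
  "vandermonde_const n \<gamma> = (\<Prod>(i, j) \<in> {(i, j). i < j \<and> j < n}. \<gamma> j - \<gamma> i)"

definition Wr_rel :: "nat \<Rightarrow> (nat \<Rightarrow> 'a::comm_ring_1) \<Rightarrow> (nat \<Rightarrow> 'a) \<Rightarrow> (nat \<Rightarrow> 'a) \<Rightarrow> bool" where
  "Wr_rel n \<gamma> p a \<longleftrightarrow>
     det (wr_matrix n \<gamma> p) = Polynomial.smult (vandermonde_const n \<gamma>) (\<Prod>i<n. [: - a i, 1 :])"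

definition rCM_lax :: "nat \<Rightarrow> (nat \<Rightarrow> 'a::comm_ring_1) \<Rightarrow> (nat \<Rightarrow> 'a) \<Rightarrow> 'a mat" where
  "rCM_lax n \<gamma> p = mat n n (\<lambda>(i, j).
     if i = j then p i - (\<Sum>k\<in>{k. k < n \<and> k \<noteq> i}. uinv (\<gamma> i - \<gamma> k))
     else uinv (\<gamma> i - \<gamma> j) * (\<Prod>k\<in>{k. k < n \<and> k \<noteq> i}. \<gamma> i - \<gamma> k)
            * uinv (\<Prod>l\<in>{l. l < n \<and> l \<noteq> j}. \<gamma> j - \<gamma> l))"

definition rCM_rel :: "nat \<Rightarrow> (nat \<Rightarrow> 'a::comm_ring_1) \<Rightarrow> (nat \<Rightarrow> 'a) \<Rightarrow> (nat \<Rightarrow> 'a) \<Rightarrow> bool" where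
  "rCM_rel n \<gamma> p a \<longleftrightarrow> char_poly (rCM_lax n \<gamma> p) = (\<Prod>i<n. [: - a i, 1 :])"

end

theory Submission
  imports Defs
begin

(* Write the twisted Wronskian matrix as W(z) = (z - p_i) V + V', with V = (gamma_i^j) the
   Vandermonde matrix and V' its derivative in gamma.  Multiplying on the right by the
   coefficient matrix Lambda of the Lagrange basis L_k for the nodes gamma_i gives V Lambda = 1
   and V' Lambda = (L_k'(gamma_i)), so W Lambda = z - M with M = (p_i delta_ik - L_k'(gamma_i)),
   and det W = det V * det (z - M) = c * det (z - M).  Evaluating L_k'(gamma_i) shows that the
   transpose of M is conjugate to the Calogero-Moser Lax matrix by the diagonal matrix of the
   squares of prod_(l ~= i) (gamma_i - gamma_l); hence det (z - M) = det (z - t).  As c is a unit,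
   the two systems of relations coincide.  The argument works over any commutative ring in which
   the gamma_i - gamma_j are units. *)

lemma uinv_eqI: "(x::'a::comm_ring_1) * y = 1 \<Longrightarrow> uinv x = y"
  unfolding uinv_def by (rule some_equality) (auto, metis mult.left_commute mult_1_right)

lemma mult_uinv: "(x::'a::comm_ring_1) dvd 1 \<Longrightarrow> x * uinv x = 1"
  by (metis dvd_def uinv_eqI)

lemma uinv_minus: "(x::'a::comm_ring_1) dvd 1 \<Longrightarrow> uinv (- x) = - uinv x"
  by (rule uinv_eqI) (simp add: mult_uinv)

lemma prod_dvd_one: "(\<And>x. x \<in> A \<Longrightarrow> (f x::'a::comm_ring_1) dvd 1) \<Longrightarrow> prod f A dvd 1"
  by (induction A rule: infinite_finite_induct) auto

lemma smult_unit_cancel: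
  "(c::'a::comm_ring_1) dvd 1 \<Longrightarrow> Polynomial.smult c p = Polynomial.smult c q \<longleftrightarrow> p = q"
  by (metis mult_uinv mult.commute smult_1_left smult_smult)

lemma poly_eq_sum_coeff_lessThan:
  fixes q :: "'a::comm_ring_1 poly"
  shows "degree q < n \<Longrightarrow> poly q x = (\<Sum>j<n. coeff q j * x ^ j)"
  unfolding poly_altdef by (rule sum.mono_neutral_left) (auto simp: coeff_eq_0)

lemma poly_eq_sum_monom_lessThan:
  fixes q :: "'a::comm_ring_1 poly"
  shows "degree q < n \<Longrightarrow> q = (\<Sum>j<n. monom (coeff q j) j)"
  by (subst poly_as_sum_of_monoms[symmetric], rule sum.mono_neutral_left) (auto simp: coeff_eq_0)

lemma sum_linear_poly: "(\<Sum>j\<in>A. [:a j, b j:]) = [:sum a A, sum b A:]"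
  by (induction A rule: infinite_finite_induct) auto

lemma prod_linear_factors_monic:
  "degree (\<Prod>l<j. [:- g l, 1:]) \<le> j \<and> coeff (\<Prod>l<j. [:- (g l::'a::comm_ring_1), 1:]) j = 1"
proof (induction j)
  case (Suc j)
  let ?Q = "\<Prod>l<j. [:- g l, 1:]"
  have split: "(\<Prod>l<Suc j. [:- g l, 1:]) = Polynomial.smult (- g j) ?Q + pCons 0 ?Q"
    by (simp add: mult.commute)
  have "degree (Polynomial.smult (- g j) ?Q + pCons 0 ?Q) \<le> Suc j"
    using Suc by (intro degree_add_le) (auto intro: le_trans[OF degree_smult_le] simp: degree_pCons_le)
  moreover have "coeff ?Q (Suc j) = 0" using Suc by (simp add: coeff_eq_0)
  ultimately show ?case unfolding split using Suc by simp
qed simp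

(* The library's pderiv needs a ring without zero divisors; over an arbitrary commutative
   ring the derivative at x is taken as the linear Taylor coefficient of p(x + z). *)
definition deriv_at :: "'a::comm_ring_1 poly \<Rightarrow> 'a \<Rightarrow> 'a" where
  "deriv_at p x = coeff (pcompose p [:x, 1:]) 1"

lemma coeff_pcompose_shift_0: "coeff (pcompose p [:x, 1:]) 0 = poly p (x::'a::comm_ring_1)"
  by (metis poly_0_coeff_0 poly_pcompose poly_pCons add.right_neutral mult_zero_left)

lemma coeff_mult_1:
  "coeff (p * q) 1 = coeff p 0 * coeff q 1 + coeff p 1 * coeff (q::'a::comm_ring_1 poly) 0"
  by (simp add: coeff_mult atMost_Suc)

lemma deriv_at_mult: "deriv_at (p * q) x = deriv_at p x * poly q x + poly p x * deriv_at q x"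
  unfolding deriv_at_def pcompose_mult coeff_mult_1 coeff_pcompose_shift_0 by (simp add: mult_ac)

lemma deriv_at_smult: "deriv_at (Polynomial.smult c p) x = c * deriv_at p x"
  unfolding deriv_at_def pcompose_smult by simp

lemma deriv_at_sum: "deriv_at (sum f A) x = (\<Sum>a\<in>A. deriv_at (f a) x)"
  unfolding deriv_at_def pcompose_sum by (simp add: coeff_sum)

lemma deriv_at_linear: "deriv_at [:- a, 1:] x = 1"
  unfolding deriv_at_def by simp

lemma deriv_at_prod:
  "finite A \<Longrightarrow> deriv_at (prod f A) x = (\<Sum>a\<in>A. (\<Prod>b\<in>A - {a}. poly (f b) x) * deriv_at (f a) x)"
proof (induction A rule: finite_induct)
  case empty
  then show ?case by (simp add: deriv_at_def)
next
  case (insert a A)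
  have "(\<Prod>c\<in>insert a A - {b}. poly (f c) x) = poly (f a) x * (\<Prod>c\<in>A - {b}. poly (f c) x)"
    if "b \<in> A" for b
  proof -
    have "insert a A - {b} = insert a (A - {b})" using insert.hyps(2) that by auto
    then show ?thesis using insert.hyps by simp
  qed
  then show ?case
    using insert by (simp add: deriv_at_mult poly_prod insert_Diff_if sum_distrib_left mult_ac)
qed

lemma deriv_at_monom: "deriv_at (monom c j) x = of_nat j * x ^ (j - 1) * c"
proof -
  have shift_power: "pcompose ([:0, 1:] ^ j) [:x, 1:] = [:x, 1:] ^ j"
    by (induction j) (simp_all add: pcompose_mult)
  have "coeff ([:x, 1:] ^ j) 1 = of_nat j * x ^ (j - 1)"
  proof (induction j)
    case (Suc j)
    have "coeff ([:x, 1:] ^ j) 0 = x ^ j"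
      by (simp add: poly_0_coeff_0[symmetric])
    with Suc show ?case by (cases j) (simp_all add: coeff_mult_1 algebra_simps)
  qed simp
  then show ?thesis
    by (simp add: deriv_at_def monom_altdef pcompose_smult shift_power)
qed

lemma deriv_at_eq_sum_coeff_lessThan:
  "degree q < n \<Longrightarrow> deriv_at q x = (\<Sum>j<n. of_nat j * x ^ (j - 1) * coeff q j)"
  by (subst poly_eq_sum_monom_lessThan[of q n]) (simp_all add: deriv_at_sum deriv_at_monom)

lemma vandermonde_const_eq_prod_lessThan:
  "vandermonde_const n g = (\<Prod>i<n. \<Prod>l<i. g i - g l)"
proof -
  have "vandermonde_const n g = (\<Prod>(i, l)\<in>(SIGMA i:{..<n}. {..<i}). g i - g l)"
    unfolding vandermonde_const_def
    by (rule prod.reindex_bij_witness[of _ "\<lambda>(i, l). (l, i)" "\<lambda>(l, i). (i, l)"]) auto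
  also have "\<dots> = (\<Prod>i<n. \<Prod>l<i. g i - g l)"
    by (rule prod.Sigma[symmetric]) auto
  finally show ?thesis .
qed

lemma det_vandermonde:
  fixes g :: "nat \<Rightarrow> 'a::comm_ring_1"
  shows "det (mat n n (\<lambda>(i, j). g i ^ j)) = vandermonde_const n g"
proof -
  \<comment> \<open>Pass to the Newton basis: \<open>U\<close> is unitriangular and \<open>V * U = N\<close> is lower triangular.\<close>
  define Q where "Q j = (\<Prod>l<j. [:- g l, 1:])" for j
  define V where "V = mat n n (\<lambda>(i, j). g i ^ j)"
  define U where "U = mat n n (\<lambda>(k, j). coeff (Q j) k)"
  define N where "N = mat n n (\<lambda>(i, j). \<Prod>l<j. g i - g l)"
  have "V * U = N"
  proof (rule eq_matI)
    fix i j assume "i < dim_row N" "j < dim_col N"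
    then have "i < n" "j < n" by (auto simp: N_def)
    then have "(V * U) $$ (i, j) = (\<Sum>k<n. coeff (Q j) k * g i ^ k)"
      by (simp add: V_def U_def scalar_prod_def lessThan_atLeast0 mult.commute)
    also have "\<dots> = poly (Q j) (g i)"
      using prod_linear_factors_monic[of g j] \<open>j < n\<close>
      by (intro poly_eq_sum_coeff_lessThan[symmetric]) (simp add: Q_def)
    also have "\<dots> = N $$ (i, j)" using \<open>i < n\<close> \<open>j < n\<close> by (simp add: Q_def N_def poly_prod)
    finally show "(V * U) $$ (i, j) = N $$ (i, j)" .
  qed (auto simp: V_def U_def N_def)
  moreover have "det U = 1"
  proof -
    have "coeff (Q j) k = 0" if "j < k" for j k
      using prod_linear_factors_monic[of g j] that by (intro coeff_eq_0) (simp add: Q_def)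
    then have "upper_triangular U" by (auto simp: upper_triangular_def U_def)
    then have "det U = prod_list (diag_mat U)" by (rule det_upper_triangular[of _ n]) (simp add: U_def)
    also have "\<dots> = 1"
      using prod_linear_factors_monic[of g]
      by (auto simp: diag_mat_def U_def Q_def intro!: prod_list_neutral)
    finally show ?thesis .
  qed
  moreover have "det N = (\<Prod>i<n. \<Prod>l<i. g i - g l)"
  proof -
    have "det N = prod_list (diag_mat N)"
      by (rule det_lower_triangular[of n]) (auto simp: N_def intro!: prod_zero)
    then show ?thesis
      by (simp add: diag_mat_def N_def prod.distinct_set_conv_list[symmetric] lessThan_atLeast0 atLeast_upt)
  qed
  moreover have "det (V * U) = det V * det U"
    by (rule det_mult) (auto simp: V_def U_def)
  ultimately show ?thesis
    unfolding V_def vandermonde_const_eq_prod_lessThan by simp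
qed

lemma similar_mat_diag_scaling:
  fixes A :: "'a::comm_ring_1 mat"
  assumes "A \<in> carrier_mat n n" and "\<And>i. i < n \<Longrightarrow> d i * d' i = 1"
  shows "similar_mat (mat n n (\<lambda>(i, j). d i * A $$ (i, j) * d' j)) A"
proof (unfold similar_mat_def, intro exI similar_mat_witI)
  show "mat_diag n d * mat_diag n d' = 1\<^sub>m n" "mat_diag n d' * mat_diag n d = 1\<^sub>m n"
    unfolding mat_diag_diag using assms(2)
    by (auto simp: mat_diag_def intro!: eq_matI) (metis mult.commute)
  show "mat n n (\<lambda>(i, j). d i * A $$ (i, j) * d' j) = mat_diag n d * A * mat_diag n d'"
    using assms(1) by (auto simp: mat_diag_mult_left mat_diag_mult_right[of _ n])
qed (use assms(1) in auto)

definition node_prod :: "nat \<Rightarrow> (nat \<Rightarrow> 'a::comm_ring_1) \<Rightarrow> nat \<Rightarrow> 'a" where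
  "node_prod n \<gamma> k = (\<Prod>l\<in>{l. l < n \<and> l \<noteq> k}. \<gamma> k - \<gamma> l)"

definition lagrange_basis :: "nat \<Rightarrow> (nat \<Rightarrow> 'a::comm_ring_1) \<Rightarrow> nat \<Rightarrow> 'a poly" where
  "lagrange_basis n \<gamma> k =
     Polynomial.smult (uinv (node_prod n \<gamma> k)) (\<Prod>l\<in>{l. l < n \<and> l \<noteq> k}. [:- \<gamma> l, 1:])"

lemma degree_lagrange_basis: "k < n \<Longrightarrow> degree (lagrange_basis n \<gamma> k) < n"
proof -
  assume "k < n"
  have "degree (lagrange_basis n \<gamma> k) \<le> card {l. l < n \<and> l \<noteq> k}"
    unfolding lagrange_basis_def
    by (rule order.trans[OF degree_smult_le], rule order.trans[OF degree_prod_sum_le]) auto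
  also have "\<dots> < card {..<n}"
    using \<open>k < n\<close> by (intro psubset_card_mono) auto
  finally show ?thesis by simp
qed

lemma node_prod_remove:
  "a < n \<Longrightarrow> a \<noteq> k \<Longrightarrow>
   node_prod n \<gamma> k = (\<gamma> k - \<gamma> a) * (\<Prod>l\<in>{l. l < n \<and> l \<noteq> k} - {a}. \<gamma> k - \<gamma> l)"
  unfolding node_prod_def by (subst prod.remove[of _ a]) auto

definition lagrange_coeff_mat :: "nat \<Rightarrow> (nat \<Rightarrow> 'a::comm_ring_1) \<Rightarrow> 'a mat" where
  "lagrange_coeff_mat n \<gamma> = mat n n (\<lambda>(j, k). coeff (lagrange_basis n \<gamma> k) j)"

definition lagrange_lax :: "nat \<Rightarrow> (nat \<Rightarrow> 'a::comm_ring_1) \<Rightarrow> (nat \<Rightarrow> 'a) \<Rightarrow> 'a mat" where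
  "lagrange_lax n \<gamma> p =
     mat n n (\<lambda>(i, k). (if i = k then p i else 0) - deriv_at (lagrange_basis n \<gamma> k) (\<gamma> i))"

context
  fixes n :: nat and \<gamma> :: "nat \<Rightarrow> 'a::comm_ring_1"
  assumes unit_diff: "\<And>i j. i < n \<Longrightarrow> j < n \<Longrightarrow> i \<noteq> j \<Longrightarrow> (\<gamma> i - \<gamma> j) dvd 1"
begin

lemma node_prod_dvd_one: "k < n \<Longrightarrow> node_prod n \<gamma> k dvd 1"
  unfolding node_prod_def by (intro prod_dvd_one unit_diff) auto

lemma poly_lagrange_basis:
  assumes "i < n" "k < n"
  shows "poly (lagrange_basis n \<gamma> k) (\<gamma> i) = (if i = k then 1 else 0)"
proof (cases "i = k")
  case True
  then show ?thesis
    using mult_uinv[OF node_prod_dvd_one[OF \<open>k < n\<close>]]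
    by (simp add: lagrange_basis_def node_prod_def poly_prod mult.commute)
next
  case False
  then have "(\<Prod>l\<in>{l. l < n \<and> l \<noteq> k}. poly [:- \<gamma> l, 1:] (\<gamma> i)) = 0"
    using \<open>i < n\<close> by (intro prod_zero) auto
  with False show ?thesis by (simp add: lagrange_basis_def poly_prod)
qed

lemma deriv_at_lagrange_basis:
  assumes "i < n" "k < n"
  shows "deriv_at (lagrange_basis n \<gamma> k) (\<gamma> i) =
    (if i = k then (\<Sum>a\<in>{a. a < n \<and> a \<noteq> k}. uinv (\<gamma> k - \<gamma> a))
     else uinv (\<gamma> i - \<gamma> k) * node_prod n \<gamma> i * uinv (node_prod n \<gamma> k))"
proof -
  define S where "S = {l. l < n \<and> l \<noteq> k}"
  have deriv: "deriv_at (lagrange_basis n \<gamma> k) (\<gamma> i) =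
      uinv (node_prod n \<gamma> k) * (\<Sum>a\<in>S. \<Prod>l\<in>S - {a}. \<gamma> i - \<gamma> l)"
    by (simp add: lagrange_basis_def S_def deriv_at_smult deriv_at_prod deriv_at_linear)
  show ?thesis
  proof (cases "i = k")
    case True
    have "(\<Prod>l\<in>S - {a}. \<gamma> k - \<gamma> l) = node_prod n \<gamma> k * uinv (\<gamma> k - \<gamma> a)" if "a \<in> S" for a
      using that node_prod_remove[of a n k \<gamma>] mult_uinv[OF unit_diff[of k a]] \<open>k < n\<close>
      by (simp add: S_def mult.commute flip: mult.assoc)
    then have "(\<Sum>a\<in>S. \<Prod>l\<in>S - {a}. \<gamma> k - \<gamma> l) = node_prod n \<gamma> k * (\<Sum>a\<in>S. uinv (\<gamma> k - \<gamma> a))"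
      by (simp add: sum_distrib_left)
    with True deriv have "deriv_at (lagrange_basis n \<gamma> k) (\<gamma> i) =
        node_prod n \<gamma> k * uinv (node_prod n \<gamma> k) * (\<Sum>a\<in>S. uinv (\<gamma> k - \<gamma> a))"
      by (simp add: mult_ac)
    with True show ?thesis
      using mult_uinv[OF node_prod_dvd_one[OF \<open>k < n\<close>]] by (simp add: S_def)
  next
    case False
    then have "i \<in> S" using \<open>i < n\<close> by (simp add: S_def)
    have "(\<Prod>l\<in>S - {a}. \<gamma> i - \<gamma> l) = 0" if "a \<in> S - {i}" for a
      using that \<open>i \<in> S\<close> by (intro prod_zero) (auto simp: S_def)
    then have "(\<Sum>a\<in>S. \<Prod>l\<in>S - {a}. \<gamma> i - \<gamma> l) = (\<Prod>l\<in>S - {i}. \<gamma> i - \<gamma> l)"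
      using \<open>i \<in> S\<close> by (subst sum.remove[of _ i]) (auto simp: S_def)
    also have "\<dots> = uinv (\<gamma> i - \<gamma> k) * node_prod n \<gamma> i"
    proof -
      have "{l. l < n \<and> l \<noteq> i} - {k} = S - {i}" by (auto simp: S_def)
      then show ?thesis
        using node_prod_remove[of k n i \<gamma>] mult_uinv[OF unit_diff[of i k]] assms False
        by (simp add: mult.commute flip: mult.assoc)
    qed
    finally show ?thesis using deriv False by (simp add: mult_ac)
  qed
qed

lemma vandermonde_mult_lagrange_coeff_mat:
  "mat n n (\<lambda>(i, j). \<gamma> i ^ j) * lagrange_coeff_mat n \<gamma> = 1\<^sub>m n"
proof (rule eq_matI)
  fix i k assume "i < dim_row (1\<^sub>m n :: 'a mat)" "k < dim_col (1\<^sub>m n :: 'a mat)"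
  then have "i < n" "k < n" by auto
  then have "(mat n n (\<lambda>(i, j). \<gamma> i ^ j) * lagrange_coeff_mat n \<gamma>) $$ (i, k) =
      (\<Sum>j<n. coeff (lagrange_basis n \<gamma> k) j * \<gamma> i ^ j)"
    by (simp add: lagrange_coeff_mat_def scalar_prod_def lessThan_atLeast0 mult.commute)
  also have "\<dots> = poly (lagrange_basis n \<gamma> k) (\<gamma> i)"
    using \<open>k < n\<close> by (intro poly_eq_sum_coeff_lessThan[symmetric] degree_lagrange_basis)
  finally show "(mat n n (\<lambda>(i, j). \<gamma> i ^ j) * lagrange_coeff_mat n \<gamma>) $$ (i, k) = 1\<^sub>m n $$ (i, k)"
    using \<open>i < n\<close> \<open>k < n\<close> by (simp add: poly_lagrange_basis)
qed (auto simp: lagrange_coeff_mat_def)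

lemma wr_matrix_mult_lagrange_coeff_mat:
  "wr_matrix n \<gamma> p * map_mat (\<lambda>c. [:c:]) (lagrange_coeff_mat n \<gamma>) =
   char_poly_matrix (lagrange_lax n \<gamma> p)"
proof (rule eq_matI)
  fix i k assume "i < dim_row (char_poly_matrix (lagrange_lax n \<gamma> p))"
    "k < dim_col (char_poly_matrix (lagrange_lax n \<gamma> p))"
  then have "i < n" "k < n" by (auto simp: char_poly_matrix_def lagrange_lax_def)
  define L where "L = lagrange_basis n \<gamma> k"
  have deg: "degree L < n" using \<open>k < n\<close> by (simp add: L_def degree_lagrange_basis)
  have "(wr_matrix n \<gamma> p * map_mat (\<lambda>c. [:c:]) (lagrange_coeff_mat n \<gamma>)) $$ (i, k) =
      (\<Sum>j<n. [:- p i * \<gamma> i ^ j + of_nat j * \<gamma> i ^ (j - 1), \<gamma> i ^ j:] * [:coeff L j:])"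
    using \<open>i < n\<close> \<open>k < n\<close>
    by (simp add: wr_matrix_def lagrange_coeff_mat_def L_def scalar_prod_def lessThan_atLeast0)
  also have "\<dots> = [:- p i * (\<Sum>j<n. coeff L j * \<gamma> i ^ j) + (\<Sum>j<n. of_nat j * \<gamma> i ^ (j - 1) * coeff L j),
                    \<Sum>j<n. coeff L j * \<gamma> i ^ j:]"
    by (simp add: sum_linear_poly algebra_simps sum.distrib sum_distrib_left sum_subtractf sum_negf)
  also have "\<dots> = [:- p i * poly L (\<gamma> i) + deriv_at L (\<gamma> i), poly L (\<gamma> i):]"
    using deg by (simp add: poly_eq_sum_coeff_lessThan deriv_at_eq_sum_coeff_lessThan)
  also have "\<dots> = char_poly_matrix (lagrange_lax n \<gamma> p) $$ (i, k)"
    using \<open>i < n\<close> \<open>k < n\<close>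
    by (simp add: L_def poly_lagrange_basis char_poly_matrix_def lagrange_lax_def)
  finally show "(wr_matrix n \<gamma> p * map_mat (\<lambda>c. [:c:]) (lagrange_coeff_mat n \<gamma>)) $$ (i, k) =
      char_poly_matrix (lagrange_lax n \<gamma> p) $$ (i, k)" .
qed (auto simp: wr_matrix_def lagrange_coeff_mat_def char_poly_matrix_def lagrange_lax_def)

lemma rCM_lax_eq_scaled_lagrange_lax:
  assumes "i < n" "j < n"
  shows "rCM_lax n \<gamma> p $$ (i, j) =
    node_prod n \<gamma> i ^ 2 * lagrange_lax n \<gamma> p $$ (j, i) * uinv (node_prod n \<gamma> j) ^ 2"
proof -
  have inv_i: "node_prod n \<gamma> i * uinv (node_prod n \<gamma> i) = 1"
    and inv_j: "node_prod n \<gamma> j * uinv (node_prod n \<gamma> j) = 1"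
    using assms by (simp_all add: mult_uinv node_prod_dvd_one)
  show ?thesis
  proof (cases "i = j")
    case True
    have "node_prod n \<gamma> i ^ 2 * x * uinv (node_prod n \<gamma> i) ^ 2 =
        (node_prod n \<gamma> i * uinv (node_prod n \<gamma> i)) ^ 2 * x" for x
      by (simp add: power_mult_distrib mult_ac)
    with inv_i \<open>i < n\<close> show ?thesis
      unfolding True[symmetric] by (simp add: rCM_lax_def lagrange_lax_def deriv_at_lagrange_basis)
  next
    case False
    have swap: "uinv (\<gamma> j - \<gamma> i) = - uinv (\<gamma> i - \<gamma> j)"
      using uinv_minus[OF unit_diff[OF assms False]] by simp
    have "rCM_lax n \<gamma> p $$ (i, j) = uinv (\<gamma> i - \<gamma> j) * node_prod n \<gamma> i * uinv (node_prod n \<gamma> j)"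
      using False assms by (simp add: rCM_lax_def node_prod_def)
    also have "\<dots> = uinv (\<gamma> i - \<gamma> j) * node_prod n \<gamma> i * uinv (node_prod n \<gamma> j)
        * (node_prod n \<gamma> i * uinv (node_prod n \<gamma> i)) * (node_prod n \<gamma> j * uinv (node_prod n \<gamma> j))"
      using inv_i inv_j by simp
    also have "\<dots> = node_prod n \<gamma> i ^ 2 * (uinv (\<gamma> i - \<gamma> j) * node_prod n \<gamma> j * uinv (node_prod n \<gamma> i))
        * uinv (node_prod n \<gamma> j) ^ 2"
      by (simp add: power2_eq_square mult_ac)
    finally show ?thesis
      using False assms by (simp add: lagrange_lax_def deriv_at_lagrange_basis swap)
  qed
qed

lemma char_poly_rCM_lax: "char_poly (rCM_lax n \<gamma> p) = char_poly (lagrange_lax n \<gamma> p)"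
proof -
  have scaled: "rCM_lax n \<gamma> p = mat n n (\<lambda>(i, j).
      node_prod n \<gamma> i ^ 2 * transpose_mat (lagrange_lax n \<gamma> p) $$ (i, j) * uinv (node_prod n \<gamma> j) ^ 2)"
    by (rule eq_matI)
      (simp_all add: rCM_lax_eq_scaled_lagrange_lax lagrange_lax_def, simp_all add: rCM_lax_def)
  have "similar_mat (rCM_lax n \<gamma> p) (transpose_mat (lagrange_lax n \<gamma> p))"
    unfolding scaled by (rule similar_mat_diag_scaling)
      (simp_all add: lagrange_lax_def mult_uinv node_prod_dvd_one flip: power_mult_distrib)
  then show ?thesis
    by (simp add: char_poly_similar char_poly_transpose_mat[of _ n] lagrange_lax_def)
qed

lemma det_wr_matrix:
  "det (wr_matrix n \<gamma> p) = Polynomial.smult (vandermonde_const n \<gamma>) (char_poly (rCM_lax n \<gamma> p))"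
proof -
  interpret const_poly: comm_ring_hom "\<lambda>c::'a. [:c:]"
    by unfold_locales simp_all
  let ?\<Lambda> = "lagrange_coeff_mat n \<gamma>"
  have wr: "det (wr_matrix n \<gamma> p) * [:det ?\<Lambda>:] = char_poly (rCM_lax n \<gamma> p)"
  proof -
    have "det (wr_matrix n \<gamma> p) * [:det ?\<Lambda>:] = det (wr_matrix n \<gamma> p * map_mat (\<lambda>c. [:c:]) ?\<Lambda>)"
      by (subst det_mult[of _ n]) (auto simp: wr_matrix_def lagrange_coeff_mat_def)
    then show ?thesis
      unfolding char_poly_rCM_lax by (simp add: wr_matrix_mult_lagrange_coeff_mat char_poly_def)
  qed
  have "vandermonde_const n \<gamma> * det ?\<Lambda> = det (mat n n (\<lambda>(i, j). \<gamma> i ^ j) * ?\<Lambda>)"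
    by (subst det_mult[of _ n]) (auto simp: det_vandermonde lagrange_coeff_mat_def)
  then have "vandermonde_const n \<gamma> * det ?\<Lambda> = 1"
    by (simp add: vandermonde_mult_lagrange_coeff_mat)
  then have "det (wr_matrix n \<gamma> p) =
      Polynomial.smult (vandermonde_const n \<gamma>) (det (wr_matrix n \<gamma> p) * [:det ?\<Lambda>:])"
    by (metis mult.right_neutral mult_smult_right one_pCons smult_pCons smult_0_right)
  with wr show ?thesis by simp
qed

end

theorem mainTheorem5:
  fixes \<phi> :: "complex \<Rightarrow> 'a::comm_ring_1"
    and r :: nat and \<gamma> p a :: "nat \<Rightarrow> 'a"
  assumes "r \<ge> 1"
    and "complex_alg_hom \<phi>"
    and "\<And>i j. i < r + 1 \<Longrightarrow> j < r + 1 \<Longrightarrow> i \<noteq> j \<Longrightarrow> (\<gamma> i - \<gamma> j) dvd 1"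
  shows "Wr_rel (r + 1) \<gamma> p a \<longleftrightarrow> rCM_rel (r + 1) \<gamma> p a"
proof -
  have "vandermonde_const (r + 1) \<gamma> dvd 1"
    unfolding vandermonde_const_def by (rule prod_dvd_one) (auto intro: assms(3))
  moreover have "det (wr_matrix (r + 1) \<gamma> p) =
      Polynomial.smult (vandermonde_const (r + 1) \<gamma>) (char_poly (rCM_lax (r + 1) \<gamma> p))"
    using assms(3) by (rule det_wr_matrix)
  ultimately show ?thesis
    unfolding Wr_rel_def rCM_rel_def by (simp add: smult_unit_cancel)
qed

end
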